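(* Let $A\in\mathbb{R}^{n\times n}$ be such that $\Lambda_1$ is complex and use the Euclidean norm (with induced spectral matrix norm). For $y_0\in\mathbb{R}^n$ with $w^{(1)}y_0\neq0$, $$a_{\min}(V_1,W_1)\le\mathrm{OT}(t,y_0)\le a_{\max}(V_1,W_1)\qquad\text{for all }t\in\mathbb{R},$$ where $a_{\min}(V_1,W_1)=\sqrt{\frac{(1+W_1)(1-V_1)}{2(1+V_1)}}$ if $V_1\le W_1$, $a_{\min}(V_1,W_1)=\sqrt{\frac{1-W_1}{2}}$ if $V_1\ge W_1$, and $a_{\max}(V_1,W_1)=\sqrt{\frac{(1+W_1)(1+V_1)}{2(1-V_1)}}$. Moreover, if $\gamma_1(\hat y_0)-\theta_1$ is an odd multiple of $\pi/2$, then $\min_{t\in\mathbb{R}}\mathrm{OT}(t,y_0)=a_{\min}(V_1,W_1)$ and $\max_{t\in\mathbb{R}}\mathrm{OT}(t,y_0)=a_{\max}(V_1,W_1)$.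
   Context: $\Lambda_1$ complex: the eigenvalues of $A$ with maximal real part are exactly a pair of simple complex conjugate eigenvalues $\lambda_1,\overline{\lambda_1}$, $\omega_1=\operatorname{Im}\lambda_1>0$. $w^{(1)}$ (row), $v^{(1)}$ (column) left/right eigenvectors for $\lambda_1$; $\hat w^{(1)}=w^{(1)}/\|w^{(1)}\|_2$, $\hat v^{(1)}=v^{(1)}/\|v^{(1)}\|_2$. $V_1=|(\hat v^{(1)})^T\hat v^{(1)}|$, $W_1=|\hat w^{(1)}(\hat w^{(1)})^T|$ ($^T$ without conjugation), both in $[0,1)$. Polar forms $\hat v^{(1)}_k=|\hat v^{(1)}_k|e^{\sqrt{-1}\alpha_{1k}}$, $\hat w^{(1)}_l=|\hat w^{(1)}_l|e^{\sqrt{-1}\beta_{1l}}$, $\hat w^{(1)}u=|\hat w^{(1)}u|e^{\sqrt{-1}\gamma_1(u)}$ for real $u$ with $w^{(1)}u\neq0$. $\hat y_0=y_0/\|y_0\|_2$. $\hat\Theta_1(t,u)=(|\hat v^{(1)}_k|\cos(\omega_1t+\alpha_{1k}+\gamma_1(u)))_{k}$, $\hat\Theta_1(t)=(|\hat v^{(1)}_k||\hat w^{(1)}_l|\cos(\omega_1t+\alpha_{1k}+\beta_{1l}))_{k,l}$, $\mathrm{OT}(t,y_0)=\|\hat\Theta_1(t)\|_2/\|\hat\Theta_1(t,\hat y_0)\|_2$. Let $R_1=\begin{bmatrix}\operatorname{Re}\hat w^{(1)}\\ \operatorname{Im}\hat w^{(1)}\end{bmatrix}\in\mathbb{R}^{2\times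 n}$ with largest singular value $\sigma_1$ and corresponding left singular vector $\alpha^{(1)}\in\mathbb{R}^2$; identifying $\mathbb{R}^2$ with $\mathbb{C}$, $\theta_1$ is the angle between the positive real axis and the vector $\sigma_1\alpha^{(1)}$ (the major semi-axis of the ellipse $\{\hat w^{(1)}u: u\in\mathbb{R}^n,\|u\|_2=1\}$ boundary). *)

theory Defs
  imports "HOL-Analysis.Analysis" "HOL-Computational_Algebra.Polynomial"
begin

definition charpoly :: "real^'n^'n \<Rightarrow> complex poly" where
  "charpoly A = det (\<chi> i j. (if i = j then [:0, 1:] else 0) - [:complex_of_real (A$i$j):])"

definition is_eigenvalue :: "real^'n^'n \<Rightarrow> complex \<Rightarrow> bool" where
  "is_eigenvalue A \<mu> \<longleftrightarrow> poly (charpoly A) \<mu> = 0"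

definition simple_eigenvalue :: "real^'n^'n \<Rightarrow> complex \<Rightarrow> bool" where
  "simple_eigenvalue A \<mu> \<longleftrightarrow> is_eigenvalue A \<mu> \<and> order \<mu> (charpoly A) = 1"

definition cmat :: "real^'n^'m \<Rightarrow> complex^'n^'m" where
  "cmat A = (\<chi> i j. complex_of_real (A$i$j))"

text \<open>Lambda_1 complex: the eigenvalues of maximal real part are exactly the simple
  conjugate pair lambda1, cnj lambda1 with Im lambda1 > 0.\<close>
definition Lambda1_complex :: "real^'n^'n \<Rightarrow> complex \<Rightarrow> bool" where
  "Lambda1_complex A l1 \<longleftrightarrow>
     Im l1 > 0 \<and> simple_eigenvalue A l1 \<and> simple_eigenvalue A (cnj l1) \<and>
     (\<forall>\<mu>. is_eigenvalue A \<mu> \<longrightarrow> Re \<mu> \<le> Re l1) \<and>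
     (\<forall>\<mu>. is_eigenvalue A \<mu> \<and> Re \<mu> = Re l1 \<longrightarrow> \<mu> = l1 \<or> \<mu> = cnj l1)"

definition nrmz :: "'a::real_normed_vector \<Rightarrow> 'a" where
  "nrmz x = (1 / norm x) *\<^sub>R x"

definition rowmul :: "complex^'n \<Rightarrow> real^'n \<Rightarrow> complex" where
  "rowmul w u = (\<Sum>l\<in>UNIV. w$l * complex_of_real (u$l))"

definition tdot :: "complex^'n \<Rightarrow> complex" where
  "tdot x = (\<Sum>k\<in>UNIV. x$k * x$k)"

text \<open>Hat-Theta_1(t,u), with vh, wh the normalised eigenvectors and om = omega_1;
  the angles are the arguments of the polar forms.\<close>
definition Theta_vec :: "complex^'n \<Rightarrow> complex^'n \<Rightarrow> real \<Rightarrow> real \<Rightarrow> real^'n \<Rightarrow> real^'n" where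
  "Theta_vec vh wh om t u = (\<chi> k. norm (vh$k) * cos (om * t + Arg (vh$k) + Arg (rowmul wh u)))"

definition Theta_mat :: "complex^'n \<Rightarrow> complex^'n \<Rightarrow> real \<Rightarrow> real \<Rightarrow> real^'n^'n" where
  "Theta_mat vh wh om t = (\<chi> k l. norm (vh$k) * norm (wh$l) * cos (om * t + Arg (vh$k) + Arg (wh$l)))"

definition spec_norm :: "real^'n^'m \<Rightarrow> real" where
  "spec_norm M = onorm (\<lambda>x. M *v x)"

definition OT :: "complex^'n \<Rightarrow> complex^'n \<Rightarrow> real \<Rightarrow> real \<Rightarrow> real^'n \<Rightarrow> real" where
  "OT vh wh om t y0 = spec_norm (Theta_mat vh wh om t) / norm (Theta_vec vh wh om t (nrmz y0))"

definition a_min :: "real \<Rightarrow> real \<Rightarrow> real" where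
  "a_min V W = (if V \<le> W then sqrt ((1 + W) * (1 - V) / (2 * (1 + V))) else sqrt ((1 - W) / 2))"

definition a_max :: "real \<Rightarrow> real \<Rightarrow> real" where
  "a_max V W = sqrt ((1 + W) * (1 + V) / (2 * (1 - V)))"

definition R1mat :: "complex^'n \<Rightarrow> real^'n^2" where
  "R1mat wh = (\<chi> i j. if i = 1 then Re (wh$j) else Im (wh$j))"

text \<open>theta is the angle of sigma_1 alpha, where alpha is a left singular vector of R
  for its largest singular value sigma_1 (= spectral norm of R).\<close>
definition major_axis_angle :: "complex^'n \<Rightarrow> real \<Rightarrow> bool" where
  "major_axis_angle wh \<theta> \<longleftrightarrow>
     (let R = R1mat wh; \<sigma> = spec_norm R in
      \<exists>\<alpha>::real^2. norm \<alpha> = 1 \<and> (R ** transpose R) *v \<alpha> = (\<sigma>^2) *\<^sub>R \<alpha> \<and>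
        \<sigma> *\<^sub>R \<alpha> = (\<sigma> * cos \<theta>) *\<^sub>R axis 1 1 + (\<sigma> * sin \<theta>) *\<^sub>R axis 2 1)"

end

theory Submission
  imports Defs
begin

text \<open>Put \<open>c = w u\<close>. Then \<open>\<Theta>(t) u = Re (e\<^sup>i\<^sup>\<omega>\<^sup>t c v)\<close>, and for a unit vector
  \<open>v\<close> one has \<open>\<parallel>Re (z v)\<parallel>\<^sup>2 = (|z|\<^sup>2 + Re (z\<^sup>2 v\<^sup>T v)) / 2\<close>. So both norms in
  \<open>OT\<close> are governed by a phase against \<open>v\<^sup>T v\<close> and by the ellipse
  \<open>{w u. \<parallel>u\<parallel> = 1}\<close>, whose semi-axes are \<open>sqrt ((1 \<plusminus> W) / 2)\<close>, the major one in the
  direction \<open>\<theta>\<close> with \<open>e\<^sup>-\<^sup>2\<^sup>i\<^sup>\<theta> w\<^sup>T w = W\<close>. The squared denominator lies between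
  \<open>(1 - V) / 2\<close> and \<open>(1 + V) / 2\<close>; the squared numerator is at most \<open>(1 + W)(1 + V) / 4\<close>,
  at least \<open>(1 + W)(1 - V) / 4\<close> (test vector at the end of the major axis) and at least
  \<open>(1 - W) / 2\<close> times the squared denominator (test vector whose image is on the ellipse in
  the direction of \<open>w y\<close>). If \<open>\<gamma> - \<theta>\<close> is an odd multiple of \<open>\<pi>/2\<close>, the denominator
  is largest exactly when the numerator sees the minor axis and smallest when it sees the
  major axis, so both bounds are attained.\<close>

definition Re_smult :: "complex \<Rightarrow> complex^'n \<Rightarrow> real^'n" where
  "Re_smult z x = (\<chi> k. Re (z * x$k))"

lemma cis_power2 [simp]: "(cis a)^2 = cis (2 * a)"
  by (metis cis_mult power2_eq_square mult_2)

lemma norm_vec_power2: "norm (x::'a::real_normed_vector^'n)^2 = (\<Sum>k\<in>UNIV. norm (x$k)^2)"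
  by (simp add: norm_vec_def L2_set_def sum_nonneg)

lemma Re_mult_Re: "Re p * Re q = (Re (p * q) + Re (p * cnj q)) / 2"
  by (simp add: algebra_simps)

lemma Re_mult_Re_same:
  "Re (a * z) * Re (b * z) = (Re (a * b * (z * z)) + Re (a * cnj b) * cmod z^2) / 2"
proof -
  have "Re (a * z) * Re (b * z) = (Re (a * z * (b * z)) + Re (a * z * cnj (b * z))) / 2"
    by (rule Re_mult_Re)
  also have "a * z * cnj (b * z) = a * cnj b * (z * cnj z)"
    by (simp add: mult_ac)
  also have "z * cnj z = of_real (cmod z^2)"
    by (rule complex_norm_square[symmetric])
  also have "a * z * (b * z) = a * b * (z * z)"
    by (simp add: mult_ac)
  finally show ?thesis by simp
qed

lemma inner_Re_smult_Re_smult: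
  "inner (Re_smult a x) (Re_smult b x) = (Re (a * cnj b) * norm x^2 + Re (a * b * tdot x)) / 2"
proof -
  have "inner (Re_smult a x) (Re_smult b x)
      = (\<Sum>k\<in>UNIV. (Re (a * b * (x$k * x$k)) + Re (a * cnj b) * cmod (x$k)^2) / 2)"
    unfolding Re_smult_def inner_vec_def by (simp only: vec_lambda_beta inner_real_def Re_mult_Re_same)
  also have "\<dots> = (Re (a * cnj b) * norm x^2 + Re (a * b * tdot x)) / 2"
    by (simp add: norm_vec_power2 tdot_def sum_divide_distrib sum.distrib sum_distrib_left
        add_divide_distrib Re_sum add.commute)
  finally show ?thesis .
qed

lemma Re_power2: "Re (z^2) = (Re z)^2 - (Im z)^2"
  by (simp add: power2_eq_square)

lemma Re_mult_cnj_self: "Re (z * cnj z) = cmod z^2"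
  by (simp add: complex_mult_cnj cmod_power2)

lemma norm_Re_smult_power2:
  "norm (Re_smult z x)^2 = (cmod z^2 * norm x^2 + Re (z^2 * tdot x)) / 2"
proof -
  have "norm (Re_smult z x)^2 = inner (Re_smult z x) (Re_smult z x)"
    by (simp add: power2_norm_eq_inner)
  also have "\<dots> = (Re (z * cnj z) * norm x^2 + Re (z * z * tdot x)) / 2"
    by (rule inner_Re_smult_Re_smult)
  also have "Re (z * cnj z) = cmod z^2" by (rule Re_mult_cnj_self)
  also have "z * z = z^2" by (rule power2_eq_square[symmetric])
  finally show ?thesis .
qed

lemma inner_Re_smult: "inner (Re_smult z x) u = Re (z * rowmul x u)"
  unfolding rowmul_def Re_smult_def inner_vec_def sum_distrib_left Re_sum
  by (intro sum.cong) (simp_all add: algebra_simps)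

lemma rowmul_Re_smult:
  "rowmul x (Re_smult h x) = (cnj h * of_real (norm x^2) + h * tdot x) / 2"
proof -
  have "rowmul x (Re_smult h x) = (\<Sum>l\<in>UNIV. (cnj h * (x$l * cnj (x$l)) + h * (x$l * x$l)) / 2)"
    unfolding rowmul_def Re_smult_def
    by (intro sum.cong) (simp_all add: complex_eq_iff algebra_simps)
  also have "\<dots> = (cnj h * (\<Sum>l\<in>UNIV. x$l * cnj (x$l)) + h * tdot x) / 2"
    by (simp only: tdot_def add_divide_distrib sum.distrib sum_divide_distrib sum_distrib_left)
  also have "(\<Sum>l\<in>UNIV. x$l * cnj (x$l)) = of_real (norm x^2)"
    unfolding norm_vec_power2 of_real_sum complex_norm_square by simp
  finally show ?thesis .
qed

lemma cmod_tdot_le: "cmod (tdot y) \<le> norm y^2"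
proof -
  have "cmod (tdot y) \<le> (\<Sum>k\<in>UNIV. cmod (y$k * y$k))" unfolding tdot_def by (rule norm_sum)
  also have "\<dots> = (\<Sum>k\<in>UNIV. norm (y$k)^2)" by (simp add: norm_mult power2_eq_square)
  also have "\<dots> = norm y^2" by (rule norm_vec_power2[symmetric])
  finally show ?thesis .
qed

lemma cmat_mult_vec_scaleR: "cmat M *v (r *\<^sub>R x) = r *\<^sub>R (cmat M *v x)"
  by (simp add: vec_eq_iff matrix_vector_mult_def scaleR_sum_right)

lemma nrmz_eigenvector: "cmat M *v x = l *s x \<Longrightarrow> cmat M *v nrmz x = l *s nrmz x"
  by (simp add: nrmz_def cmat_mult_vec_scaleR vec_eq_iff)

lemma cmat_transpose_mult_vec: "cmat (transpose A) *v w = w v* cmat A"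
  by (simp add: vec_eq_iff vector_matrix_mult_def matrix_vector_mult_def cmat_def transpose_def
      mult.commute)

text \<open>If \<open>|y\<^sup>T y| = \<parallel>y\<parallel>\<^sup>2\<close>, a phase multiple of \<open>y\<close> is real, and a real
  eigenvector of a real matrix has a real eigenvalue.\<close>
lemma cmod_tdot_eigenvector_less_1:
  fixes M :: "real^'n^'n"
  assumes ny: "norm y = 1" and ev: "cmat M *v y = l *s y" and l: "Im l \<noteq> 0"
  shows "cmod (tdot y) < 1"
proof (rule ccontr)
  assume "\<not> cmod (tdot y) < 1"
  with cmod_tdot_le[of y] ny have "cmod (tdot y) = 1" by simp
  then have td: "tdot y = cis (Arg (tdot y))"
    using rcis_cmod_Arg[of "tdot y"] by (simp add: rcis_def)
  define c where "c = cis (- Arg (tdot y) / 2)"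
  define z where "z = c *s y"
  have "norm z^2 = norm y^2"
    by (simp add: norm_vec_power2 z_def c_def norm_mult)
  then have nz: "norm z = 1"
    using ny by (metis norm_ge_zero power2_eq_iff_nonneg one_power2 zero_le_one)
  have "tdot z = c^2 * tdot y"
    unfolding tdot_def z_def by (simp add: sum_distrib_left power2_eq_square mult_ac)
  also have "\<dots> = 1" by (subst td) (simp add: c_def cis_mult)
  finally have "norm (Re_smult (-\<i>) z)^2 = 0"
    by (simp add: norm_Re_smult_power2 nz)
  then have real: "\<And>k. Im (z$k) = 0" by (simp add: vec_eq_iff Re_smult_def)
  have "z \<noteq> 0" using nz by auto
  then obtain k where zk: "z$k \<noteq> 0" by (auto simp: vec_eq_iff)
  have "cmat M *v z = l *s z"
    using ev by (simp add: z_def vector_scalar_commute vec_eq_iff mult_ac)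
  moreover have "Im ((cmat M *v z)$k) = 0"
    using real by (simp add: cmat_def matrix_vector_mult_def Im_sum)
  moreover have "Re (z$k) \<noteq> 0" using zk real by (simp add: complex_eq_iff)
  ultimately show False using l real by (simp add: vec_eq_iff)
qed

lemma exists_unit_phase: "\<exists>h. cmod h = 1 \<and> h^2 * t = of_real (cmod t)"
proof (intro exI conjI)
  have "cis (- Arg t) * t = cis (- Arg t) * rcis (cmod t) (Arg t)"
    by (simp add: rcis_cmod_Arg)
  also have "\<dots> = of_real (cmod t)"
    by (simp add: rcis_def cis_mult mult.left_commute)
  finally show "cis (- Arg t / 2)^2 * t = of_real (cmod t)"
    by simp
qed simp

lemma rowmul_major_axis_point:
  assumes nx: "norm x = 1" and h: "cmod h = 1" "h^2 * tdot x = of_real (cmod (tdot x))"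
  shows "rowmul x (Re_smult h x) = cnj h * of_real ((1 + cmod (tdot x)) / 2)"
    and "norm (Re_smult h x)^2 = (1 + cmod (tdot x)) / 2"
proof -
  have hh: "cnj h * h = 1"
    using complex_norm_square[of h] h(1) by (simp add: mult.commute)
  have "cnj h * (h^2 * tdot x) = (cnj h * h) * h * tdot x"
    by (simp add: power2_eq_square mult_ac)
  also have "\<dots> = h * tdot x"
    by (simp add: hh)
  finally have "h * tdot x = cnj h * of_real (cmod (tdot x))"
    by (simp add: h(2))
  then show "rowmul x (Re_smult h x) = cnj h * of_real ((1 + cmod (tdot x)) / 2)"
    by (simp add: rowmul_Re_smult nx field_simps)
  show "norm (Re_smult h x)^2 = (1 + cmod (tdot x)) / 2"
    by (simp add: norm_Re_smult_power2 nx h)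
qed

lemma inner_power2_div_orthogonal_le:
  fixes r s u :: "'a::real_inner"
  assumes rs: "inner r s = 0" and "r \<noteq> 0" "s \<noteq> 0"
  shows "(inner r u)^2 / inner r r + (inner s u)^2 / inner s s \<le> norm u^2"
proof -
  define p where "p = inner r r"
  define q where "q = inner s s"
  define X where "X = inner r u"
  define Y where "Y = inner s u"
  have pq: "p > 0" "q > 0" using assms by (simp_all add: p_def q_def)
  define z where "z = (p * q) *\<^sub>R u - (q * X) *\<^sub>R r - (p * Y) *\<^sub>R s"
  have sr: "inner s r = 0" using rs by (simp add: inner_commute)
  have ur: "inner u r = X" "inner u s = Y" by (simp_all add: X_def Y_def inner_commute)
  have "inner z z = (p*q)*(p*q) * inner u u - 2*(p*q)*(q*X) * X - 2*(p*q)*(p*Y)*Y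
      + (q*X)*(q*X)*p + (p*Y)*(p*Y)*q"
    unfolding z_def
    by (simp add: inner_diff_left inner_diff_right rs sr ur p_def[symmetric] q_def[symmetric]
        X_def[symmetric] Y_def[symmetric] algebra_simps)
  also have "\<dots> = (p * q) * (p * q * norm u^2 - q * X^2 - p * Y^2)"
    by (simp add: power2_norm_eq_inner[symmetric] algebra_simps power2_eq_square)
  finally have "inner z z = (p * q) * (p * q * norm u^2 - q * X^2 - p * Y^2)" .
  then have "(p * q) * 0 \<le> (p * q) * (p * q * norm u^2 - q * X^2 - p * Y^2)"
    using inner_ge_zero[of z] by simp
  then have "0 \<le> p * q * norm u^2 - q * X^2 - p * Y^2"
    using pq by (simp only: mult_le_cancel_left_pos mult_pos_pos)
  then have "(q * X^2 + p * Y^2) / (p * q) \<le> norm u^2"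
    using pq by (simp add: divide_le_eq mult.commute)
  then show ?thesis
    using pq by (simp add: p_def q_def X_def Y_def add_divide_distrib)
qed

lemma rowmul_in_ellipse:
  fixes x :: "complex^'n"
  assumes nx: "norm x = 1" and h: "cmod h = 1" "h^2 * tdot x = of_real (cmod (tdot x))"
    and W: "cmod (tdot x) < 1"
  shows "(Re (h * rowmul x u))^2 / ((1 + cmod (tdot x)) / 2)
       + (Im (h * rowmul x u))^2 / ((1 - cmod (tdot x)) / 2) \<le> norm u^2"
proof -
  define r where "r = Re_smult h x"
  define s where "s = Re_smult (- \<i> * h) x"
  have hh: "h * cnj h = 1"
    using complex_norm_square[of h] h(1) by simp
  have h2: "h * h * tdot x = of_real (cmod (tdot x))"
    using h(2) by (simp add: power2_eq_square)
  have rr: "inner r r = (1 + cmod (tdot x)) / 2"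
    by (simp add: r_def inner_Re_smult_Re_smult nx hh h2)
  have "inner s s = (Re (h * cnj h) + Re (- (h * h * tdot x))) / 2"
    by (simp add: s_def inner_Re_smult_Re_smult nx mult_ac)
  then have ss: "inner s s = (1 - cmod (tdot x)) / 2"
    by (simp add: hh h2)
  have "inner r s = (Re (\<i> * (h * cnj h)) + Re (- \<i> * (h * h * tdot x))) / 2"
    by (simp add: r_def s_def inner_Re_smult_Re_smult nx mult_ac)
  then have rs: "inner r s = 0"
    by (simp add: hh h2)
  have "r \<noteq> 0"
  proof
    assume "r = 0"
    with rr have "1 + cmod (tdot x) = 0" by simp
    then show False by (smt (verit) norm_ge_zero)
  qed
  moreover have "s \<noteq> 0"
  proof
    assume "s = 0"
    with ss W show False by simp
  qed
  moreover have "inner r u = Re (h * rowmul x u)" and "inner s u = Im (h * rowmul x u)"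
    by (simp_all add: r_def s_def inner_Re_smult mult.assoc)
  ultimately show ?thesis
    using inner_power2_div_orthogonal_le[OF rs, of u] rr ss by simp
qed

lemma cmod_rowmul_power2_le:
  fixes x :: "complex^'n"
  assumes nx: "norm x = 1" and W: "cmod (tdot x) < 1"
  shows "cmod (rowmul x u)^2 \<le> (1 + cmod (tdot x)) / 2 * norm u^2"
proof -
  obtain h where h: "cmod h = 1" "h^2 * tdot x = of_real (cmod (tdot x))"
    using exists_unit_phase by blast
  define p where "p = (1 + cmod (tdot x)) / 2"
  define q where "q = (1 - cmod (tdot x)) / 2"
  define X where "X = Re (h * rowmul x u)"
  define Y where "Y = Im (h * rowmul x u)"
  have pq: "0 < q" "q \<le> p"
    using W by (simp_all add: p_def q_def)
  have "cmod (rowmul x u)^2 = cmod (h * rowmul x u)^2"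
    by (simp add: norm_mult h(1))
  also have "\<dots> = X^2 + Y^2"
    by (simp only: X_def Y_def cmod_power2)
  also have "\<dots> = p * (X^2 / p) + q * (Y^2 / q)"
    using pq by simp
  also have "\<dots> \<le> p * (X^2 / p) + p * (Y^2 / q)"
    using pq by (intro add_left_mono mult_right_mono) simp_all
  also have "\<dots> = p * (X^2 / p + Y^2 / q)"
    by (simp add: distrib_left)
  also have "\<dots> \<le> p * norm u^2"
    using rowmul_in_ellipse[OF nx h W, of u] pq
    by (intro mult_left_mono) (simp_all add: X_def Y_def p_def q_def)
  finally show ?thesis by (simp add: p_def)
qed

lemma rowmul_preimage_bound:
  fixes x :: "complex^'n"
  assumes nx: "norm x = 1" and W: "cmod (tdot x) < 1" and e: "cmod e = 1"
  obtains u where "rowmul x u = e" "norm u^2 \<le> 2 / (1 - cmod (tdot x))"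
proof
  define T where "T = tdot x"
  define K where "K = 2 / (1 - cmod T^2)"
  \<comment> \<open>\<open>h\<close> solves \<open>cnj h + h T = 2 e\<close>, i.e. \<open>w (Re (h w)) = e\<close>\<close>
  define h where "h = (cnj e - e * cnj T) * of_real K"
  define u where "u = Re_smult h x"
  have ee: "e * cnj e = 1"
    using complex_norm_square[of e] e by simp
  have TT: "T * cnj T = of_real (cmod T^2)"
    by (rule complex_norm_square[symmetric])
  have W2: "cmod T^2 < 1"
    using W by (simp add: T_def power_less_one_iff)
  then have K: "(1 - cmod T^2) * K = 2" and K0: "0 \<le> K"
    by (simp_all add: K_def field_simps)
  have "rowmul x u = (cnj h + h * T) / 2"
    by (simp add: u_def rowmul_Re_smult nx T_def)
  also have "cnj h + h * T = e * (1 - T * cnj T) * of_real K"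
    by (simp add: h_def algebra_simps)
  also have "\<dots> = e * of_real ((1 - cmod T^2) * K)"
    by (simp add: TT)
  finally show ru: "rowmul x u = e"
    by (simp add: K)
  have "norm u^2 = Re (h * e)"
    using inner_Re_smult[of h x u] ru by (simp add: u_def power2_norm_eq_inner)
  also have "h * e = (1 - cnj T * e^2) * of_real K"
    using ee by (simp add: h_def algebra_simps power2_eq_square)
  also have "Re \<dots> = (1 - Re (cnj T * e^2)) * K"
    by simp
  also have "\<dots> \<le> (1 + cmod T) * K"
  proof -
    have "- Re (cnj T * e^2) \<le> cmod T"
      using abs_Re_le_cmod[of "cnj T * e^2"] e by (simp add: norm_mult norm_power)
    then show ?thesis
      using K0 by (intro mult_right_mono) auto
  qed
  also have "\<dots> = 2 / (1 - cmod T)"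
  proof -
    have "(1 + cmod T) * K * (1 - cmod T) = 2"
      using K by (simp add: power2_eq_square algebra_simps)
    moreover have "1 - cmod T \<noteq> 0"
      using W by (simp add: T_def)
    ultimately show ?thesis
      by (simp add: eq_divide_eq)
  qed
  finally show "norm u^2 \<le> 2 / (1 - cmod (tdot x))"
    by (simp add: T_def)
qed

lemma R1mat_mult_vec:
  "(R1mat wh *v u)$1 = Re (rowmul wh u)" "(R1mat wh *v u)$2 = Im (rowmul wh u)"
  by (simp_all add: R1mat_def matrix_vector_mult_def rowmul_def Re_sum Im_sum)

lemma norm_R1mat_mult_vec: "norm (R1mat wh *v u) = cmod (rowmul wh u)"
  by (simp add: norm_vec_def L2_set_def sum_2 R1mat_mult_vec cmod_def)

lemma transpose_R1mat_mult_vec: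
  "transpose (R1mat wh) *v a = Re_smult (Complex (a$1) (- a$2)) wh"
  by (simp add: vec_eq_iff matrix_vector_mult_def transpose_def R1mat_def Re_smult_def sum_2
      mult.commute)

lemma spec_norm_nonneg: "0 \<le> spec_norm M"
  unfolding spec_norm_def by (rule onorm_pos_le) simp

lemma spec_norm_power2_le:
  fixes M :: "real^'n^'m"
  assumes "0 \<le> K" and "\<And>u. norm (M *v u)^2 \<le> K * norm u^2"
  shows "spec_norm M^2 \<le> K"
proof -
  have "spec_norm M \<le> sqrt K"
    unfolding spec_norm_def
  proof (rule onorm_le)
    fix u
    show "norm (M *v u) \<le> sqrt K * norm u"
      using real_sqrt_le_mono[OF assms(2)[of u]] by (simp add: real_sqrt_mult)
  qed
  then have "spec_norm M^2 \<le> (sqrt K)^2"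
    using spec_norm_nonneg by (rule power_mono)
  then show ?thesis
    using assms(1) by simp
qed

lemma spec_norm_power2_ge:
  fixes M :: "real^'n^'m"
  assumes "u \<noteq> 0"
  shows "norm (M *v u)^2 / norm u^2 \<le> spec_norm M^2"
proof -
  have "norm (M *v u) / norm u \<le> spec_norm M"
    unfolding spec_norm_def by (rule le_onorm) simp
  then have "(norm (M *v u) / norm u)^2 \<le> spec_norm M^2"
    by (rule power_mono) simp
  then show ?thesis
    by (simp add: power_divide)
qed

lemma spec_norm_R1mat:
  fixes wh :: "complex^'n"
  assumes nw: "norm wh = 1" and W: "cmod (tdot wh) < 1"
  shows "spec_norm (R1mat wh)^2 = (1 + cmod (tdot wh)) / 2"
proof (rule antisym)
  show "spec_norm (R1mat wh)^2 \<le> (1 + cmod (tdot wh)) / 2"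
  proof (rule spec_norm_power2_le)
    fix u
    show "norm (R1mat wh *v u)^2 \<le> (1 + cmod (tdot wh)) / 2 * norm u^2"
      unfolding norm_R1mat_mult_vec by (rule cmod_rowmul_power2_le[OF nw W])
  qed (simp add: add_nonneg_nonneg)
  obtain h where h: "cmod h = 1" "h^2 * tdot wh = of_real (cmod (tdot wh))"
    using exists_unit_phase by blast
  define K where "K = (1 + cmod (tdot wh)) / 2"
  have K: "K > 0"
    by (simp add: K_def add_pos_nonneg)
  have "rowmul wh (Re_smult h wh) = cnj h * of_real K"
    using rowmul_major_axis_point(1)[OF nw h] by (simp add: K_def)
  then have "norm (R1mat wh *v Re_smult h wh)^2 = K^2"
    using h(1) K by (simp add: norm_R1mat_mult_vec norm_mult)
  moreover have "norm (Re_smult h wh)^2 = K"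
    using rowmul_major_axis_point(2)[OF nw h] by (simp add: K_def)
  ultimately show "(1 + cmod (tdot wh)) / 2 \<le> spec_norm (R1mat wh)^2"
    using spec_norm_power2_ge[of "Re_smult h wh" "R1mat wh"] K
    by (force simp: K_def power2_eq_square)
qed

text \<open>Identifying \<open>\<alpha> \<in> \<real>\<^sup>2\<close> with \<open>a = \<alpha>\<^sub>1 + i \<alpha>\<^sub>2\<close>, the vector \<open>R R\<^sup>T \<alpha>\<close> is
  \<open>(a + cnj a w\<^sup>T w) / 2\<close>; with \<open>\<sigma>\<^sup>2 = (1 + W) / 2\<close> the eigen-equation becomes
  \<open>cnj a w\<^sup>T w = W a\<close>.\<close>
lemma major_axis_angle_phase:
  fixes wh :: "complex^'n"
  assumes nw: "norm wh = 1" and W: "cmod (tdot wh) < 1" and \<theta>: "major_axis_angle wh \<theta>"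
  shows "cis (- \<theta>)^2 * tdot wh = of_real (cmod (tdot wh))"
proof -
  define R where "R = R1mat wh"
  define \<sigma> where "\<sigma> = spec_norm R"
  have \<sigma>2: "\<sigma>^2 = (1 + cmod (tdot wh)) / 2"
    unfolding \<sigma>_def R_def by (rule spec_norm_R1mat[OF nw W])
  then have "\<sigma> \<noteq> 0"
    by (auto simp: add_nonneg_eq_0_iff)
  from \<theta> obtain \<alpha> :: "real^2" where \<alpha>: "(R ** transpose R) *v \<alpha> = \<sigma>^2 *\<^sub>R \<alpha>"
      and "\<sigma> *\<^sub>R \<alpha> = (\<sigma> * cos \<theta>) *\<^sub>R axis 1 1 + (\<sigma> * sin \<theta>) *\<^sub>R axis 2 1"
    unfolding major_axis_angle_def Let_def R_def \<sigma>_def by blast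
  with \<open>\<sigma> \<noteq> 0\<close> have \<alpha>12: "\<alpha>$1 = cos \<theta>" "\<alpha>$2 = sin \<theta>"
    by (auto simp: vec_eq_iff axis_def dest: spec[of _ 1] spec[of _ 2])
  have "Complex (\<alpha>$1) (- \<alpha>$2) = cis (- \<theta>)"
    by (simp add: \<alpha>12 complex_eq_iff)
  then have "transpose R *v \<alpha> = Re_smult (cis (- \<theta>)) wh"
    unfolding R_def transpose_R1mat_mult_vec by simp
  moreover have "R *v (transpose R *v \<alpha>) = \<sigma>^2 *\<^sub>R \<alpha>"
    using \<alpha> by (simp only: matrix_vector_mul_assoc)
  ultimately have "R *v Re_smult (cis (- \<theta>)) wh = \<sigma>^2 *\<^sub>R \<alpha>"
    by simp
  then have "rowmul wh (Re_smult (cis (- \<theta>)) wh) = of_real (\<sigma>^2) * cis \<theta>"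
    using R1mat_mult_vec[of wh "Re_smult (cis (- \<theta>)) wh"]
    by (simp add: R_def complex_eq_iff \<alpha>12)
  then have "cis (- \<theta>) * tdot wh = of_real (cmod (tdot wh)) * cis \<theta>"
    by (simp add: rowmul_Re_smult nw \<sigma>2 cis_cnj field_simps)
  then have "cis (- \<theta>) * (cis (- \<theta>) * tdot wh) = of_real (cmod (tdot wh))"
    by (simp add: cis_mult mult.left_commute)
  then show ?thesis
    by (simp add: power2_eq_square mult.assoc)
qed

lemma cos_add_Arg: "cmod a * cos (x + Arg a) = Re (cis x * a)"
proof -
  have "cis x * a = rcis 1 x * rcis (cmod a) (Arg a)"
    by (simp add: rcis_cmod_Arg cis_rcis_eq)
  also have "\<dots> = rcis (cmod a) (x + Arg a)"
    by (simp add: rcis_mult)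
  finally show ?thesis by simp
qed

lemma cos_add_Arg_Arg: "cmod a * cmod b * cos (x + Arg a + Arg b) = Re (cis x * a * b)"
proof -
  have "cis x * a * b = rcis 1 x * rcis (cmod a) (Arg a) * rcis (cmod b) (Arg b)"
    by (simp add: rcis_cmod_Arg cis_rcis_eq)
  also have "\<dots> = rcis (cmod a * cmod b) (x + Arg a + Arg b)"
    by (simp add: rcis_mult)
  finally show ?thesis by simp
qed

lemma Theta_mat_mult_vec:
  "Theta_mat vh wh om t *v u = Re_smult (cis (om * t) * rowmul wh u) vh"
proof (subst vec_eq_iff, intro allI)
  fix k
  have "(Theta_mat vh wh om t *v u)$k = Re (\<Sum>l\<in>UNIV. cis (om * t) * vh$k * wh$l * of_real (u$l))"
    unfolding Theta_mat_def matrix_vector_mult_def by (simp add: cos_add_Arg_Arg Re_sum)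
  also have "(\<Sum>l\<in>UNIV. cis (om * t) * vh$k * wh$l * of_real (u$l)) = cis (om * t) * rowmul wh u * vh$k"
    by (simp add: rowmul_def sum_distrib_left sum_distrib_right mult_ac)
  finally show "(Theta_mat vh wh om t *v u)$k = Re_smult (cis (om * t) * rowmul wh u) vh $ k"
    by (simp add: Re_smult_def)
qed

lemma Theta_vec_eq: "Theta_vec vh wh om t u = Re_smult (cis (om * t + Arg (rowmul wh u))) vh"
proof (subst vec_eq_iff, intro allI)
  fix k
  have "om * t + Arg (vh$k) + Arg (rowmul wh u) = (om * t + Arg (rowmul wh u)) + Arg (vh$k)"
    by simp
  then show "Theta_vec vh wh om t u $ k = Re_smult (cis (om * t + Arg (rowmul wh u))) vh $ k"
    unfolding Theta_vec_def Re_smult_def by (simp only: vec_lambda_beta cos_add_Arg)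
qed

lemma norm_Theta_mat_mult_vec_power2:
  assumes "norm vh = 1"
  shows "norm (Theta_mat vh wh om t *v u)^2
     = (cmod (rowmul wh u)^2 + Re (cis (2 * (om * t)) * (rowmul wh u)^2 * tdot vh)) / 2"
  by (simp add: Theta_mat_mult_vec norm_Re_smult_power2 assms norm_mult power_mult_distrib)

lemma norm_Theta_vec_power2:
  assumes "norm vh = 1"
  shows "norm (Theta_vec vh wh om t u)^2 = (1 + Re (cis (2 * (om * t + Arg (rowmul wh u))) * tdot vh)) / 2"
  by (simp add: Theta_vec_eq norm_Re_smult_power2 assms)

lemma norm_Theta_vec_power2_bounds:
  assumes "norm vh = 1"
  shows "(1 - cmod (tdot vh)) / 2 \<le> norm (Theta_vec vh wh om t u)^2"
    and "norm (Theta_vec vh wh om t u)^2 \<le> (1 + cmod (tdot vh)) / 2"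
  using abs_Re_le_cmod[of "cis (2 * (om * t + Arg (rowmul wh u))) * tdot vh"]
  by (simp_all add: norm_Theta_vec_power2 assms norm_mult)

lemma spec_norm_Theta_mat_power2_le:
  assumes vh: "norm vh = 1" and wh: "norm wh = 1" and W: "cmod (tdot wh) < 1"
  shows "spec_norm (Theta_mat vh wh om t)^2 \<le> (1 + cmod (tdot wh)) * (1 + cmod (tdot vh)) / 4"
proof (rule spec_norm_power2_le)
  fix u
  define c where "c = rowmul wh u"
  have "Re (cis (2 * (om * t)) * c^2 * tdot vh) \<le> cmod c^2 * cmod (tdot vh)"
    using complex_Re_le_cmod[of "cis (2 * (om * t)) * c^2 * tdot vh"]
    by (simp add: norm_mult norm_power)
  then have "norm (Theta_mat vh wh om t *v u)^2 \<le> cmod c^2 * ((1 + cmod (tdot vh)) / 2)"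
    by (simp add: norm_Theta_mat_mult_vec_power2 vh c_def[symmetric] field_simps)
  also have "\<dots> \<le> ((1 + cmod (tdot wh)) / 2 * norm u^2) * ((1 + cmod (tdot vh)) / 2)"
    unfolding c_def by (intro mult_right_mono cmod_rowmul_power2_le[OF wh W]) simp
  finally show "norm (Theta_mat vh wh om t *v u)^2
      \<le> (1 + cmod (tdot wh)) * (1 + cmod (tdot vh)) / 4 * norm u^2"
    by (simp add: field_simps)
qed simp

lemma spec_norm_Theta_mat_power2_ge_major:
  assumes vh: "norm vh = 1" and wh: "norm wh = 1"
    and h: "cmod h = 1" "h^2 * tdot wh = of_real (cmod (tdot wh))"
  shows "(1 + cmod (tdot wh)) * (1 + Re (cis (2 * (om * t)) * cnj h^2 * tdot vh)) / 4
     \<le> spec_norm (Theta_mat vh wh om t)^2"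
proof -
  define K where "K = (1 + cmod (tdot wh)) / 2"
  define Z where "Z = cis (2 * (om * t)) * cnj h^2 * tdot vh"
  define u where "u = Re_smult h wh"
  have K: "K > 0"
    by (simp add: K_def add_pos_nonneg)
  have c: "rowmul wh u = cnj h * of_real K"
    unfolding u_def K_def by (rule rowmul_major_axis_point(1)[OF wh h])
  have nu: "norm u^2 = K"
    unfolding u_def K_def by (rule rowmul_major_axis_point(2)[OF wh h])
  then have "u \<noteq> 0"
    using K by auto
  have "cmod (rowmul wh u) = K"
    using h(1) K by (simp add: c norm_mult)
  moreover have "cis (2 * (om * t)) * (rowmul wh u)^2 * tdot vh = of_real (K^2) * Z"
    by (simp add: Z_def c power_mult_distrib mult_ac)
  ultimately have "norm (Theta_mat vh wh om t *v u)^2 = (K^2 + Re (of_real (K^2) * Z)) / 2"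
    by (simp only: norm_Theta_mat_mult_vec_power2[OF vh])
  then have "norm (Theta_mat vh wh om t *v u)^2 = K^2 * (1 + Re Z) / 2"
    by (simp add: algebra_simps)
  then have ratio: "norm (Theta_mat vh wh om t *v u)^2 / norm u^2
      = (1 + cmod (tdot wh)) * (1 + Re Z) / 4"
    unfolding nu using K by (simp add: K_def power2_eq_square field_simps)
  show ?thesis
    unfolding Z_def[symmetric] ratio[symmetric] by (rule spec_norm_power2_ge[OF \<open>u \<noteq> 0\<close>])
qed

lemma spec_norm_Theta_mat_power2_ge:
  assumes vh: "norm vh = 1" and wh: "norm wh = 1"
  shows "(1 + cmod (tdot wh)) * (1 - cmod (tdot vh)) / 4 \<le> spec_norm (Theta_mat vh wh om t)^2"
proof -
  obtain h where h: "cmod h = 1" "h^2 * tdot wh = of_real (cmod (tdot wh))"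
    using exists_unit_phase by blast
  have "- cmod (tdot vh) \<le> Re (cis (2 * (om * t)) * cnj h^2 * tdot vh)"
    using abs_Re_le_cmod[of "cis (2 * (om * t)) * cnj h^2 * tdot vh"] h(1)
    by (simp add: norm_mult norm_power)
  then have "(1 + cmod (tdot wh)) * (1 - cmod (tdot vh)) / 4
      \<le> (1 + cmod (tdot wh)) * (1 + Re (cis (2 * (om * t)) * cnj h^2 * tdot vh)) / 4"
    by (intro divide_right_mono mult_left_mono) simp_all
  also have "\<dots> \<le> spec_norm (Theta_mat vh wh om t)^2"
    by (rule spec_norm_Theta_mat_power2_ge_major[OF vh wh h])
  finally show ?thesis .
qed

lemma spec_norm_Theta_mat_power2_ge_Theta_vec:
  assumes vh: "norm vh = 1" and wh: "norm wh = 1" and W: "cmod (tdot wh) < 1"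
  shows "norm (Theta_vec vh wh om t y)^2 * ((1 - cmod (tdot wh)) / 2)
     \<le> spec_norm (Theta_mat vh wh om t)^2"
proof -
  obtain u where u: "rowmul wh u = cis (Arg (rowmul wh y))" "norm u^2 \<le> 2 / (1 - cmod (tdot wh))"
    using rowmul_preimage_bound[OF wh W, of "cis (Arg (rowmul wh y))"] by auto
  have "u \<noteq> 0"
    using u(1) by (auto simp: rowmul_def)
  then have pos: "0 < norm u^2"
    by simp
  have "Theta_mat vh wh om t *v u = Theta_vec vh wh om t y"
    by (simp add: Theta_mat_mult_vec Theta_vec_eq u(1) cis_mult)
  then have "norm (Theta_vec vh wh om t y)^2 / norm u^2 \<le> spec_norm (Theta_mat vh wh om t)^2"
    using spec_norm_power2_ge[OF \<open>u \<noteq> 0\<close>] by metis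
  moreover have "(1 - cmod (tdot wh)) / 2 \<le> 1 / norm u^2"
  proof -
    have "(1 - cmod (tdot wh)) / 2 = 1 / (2 / (1 - cmod (tdot wh)))"
      by simp
    also have "\<dots> \<le> 1 / norm u^2"
      using u(2) pos W by (intro divide_left_mono) simp_all
    finally show ?thesis .
  qed
  then have "norm (Theta_vec vh wh om t y)^2 * ((1 - cmod (tdot wh)) / 2)
      \<le> norm (Theta_vec vh wh om t y)^2 / norm u^2"
    by (metis mult_left_mono zero_le_power2 times_divide_eq_right mult_1_right)
  ultimately show ?thesis
    by linarith
qed

lemma norm_Theta_mat_mult_vec_power2_antiphase:
  assumes vh: "norm vh = 1"
    and anti: "cis (2 * (om * t + \<theta>)) * tdot vh = - of_real (cmod (tdot vh))"
  shows "norm (Theta_mat vh wh om t *v u)^2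
     = ((1 - cmod (tdot vh)) * (Re (cis (- \<theta>) * rowmul wh u))^2
        + (1 + cmod (tdot vh)) * (Im (cis (- \<theta>) * rowmul wh u))^2) / 2"
proof -
  define V where "V = cmod (tdot vh)"
  define d where "d = cis (- \<theta>) * rowmul wh u"
  have "rowmul wh u = cis \<theta> * d"
    by (simp add: d_def mult.assoc[symmetric] cis_mult)
  then have "cis (2 * (om * t)) * (rowmul wh u)^2 * tdot vh = (cis (2 * (om * t + \<theta>)) * tdot vh) * d^2"
    by (simp add: power_mult_distrib cis_mult distrib_left ac_simps)
  also have "\<dots> = - of_real V * d^2"
    by (simp only: anti V_def)
  finally have "cis (2 * (om * t)) * (rowmul wh u)^2 * tdot vh = - of_real V * d^2" .
  moreover have "cmod (rowmul wh u) = cmod d"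
    by (simp add: d_def norm_mult)
  ultimately have "norm (Theta_mat vh wh om t *v u)^2 = (cmod d^2 + Re (- of_real V * d^2)) / 2"
    by (simp only: norm_Theta_mat_mult_vec_power2[OF vh])
  also have "\<dots> = ((1 - V) * (Re d)^2 + (1 + V) * (Im d)^2) / 2"
    by (simp add: cmod_power2 Re_power2 algebra_simps)
  finally show ?thesis
    unfolding V_def d_def .
qed

lemma spec_norm_Theta_mat_power2_le_antiphase:
  assumes vh: "norm vh = 1" and wh: "norm wh = 1" and W: "cmod (tdot wh) < 1"
    and \<theta>: "cis (- \<theta>)^2 * tdot wh = of_real (cmod (tdot wh))"
    and anti: "cis (2 * (om * t + \<theta>)) * tdot vh = - of_real (cmod (tdot vh))"
  shows "spec_norm (Theta_mat vh wh om t)^2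
     \<le> max ((1 - cmod (tdot vh)) * (1 + cmod (tdot wh))) ((1 + cmod (tdot vh)) * (1 - cmod (tdot wh))) / 4"
    (is "_ \<le> ?M / 4")
proof (rule spec_norm_power2_le)
  fix u
  define V where "V = cmod (tdot vh)"
  define p where "p = (1 + cmod (tdot wh)) / 2"
  define q where "q = (1 - cmod (tdot wh)) / 2"
  define d where "d = cis (- \<theta>) * rowmul wh u"
  have V: "0 \<le> V" "V \<le> 1"
    using cmod_tdot_le[of vh] vh by (simp_all add: V_def)
  have pq: "0 < p" "0 < q"
    using W by (simp_all add: p_def q_def add_pos_nonneg)
  have "norm (Theta_mat vh wh om t *v u)^2 = ((1 - V) * (Re d)^2 + (1 + V) * (Im d)^2) / 2"
    unfolding V_def d_def by (rule norm_Theta_mat_mult_vec_power2_antiphase[OF vh anti])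
  also have "(1 - V) * (Re d)^2 + (1 + V) * (Im d)^2
      = ((1 - V) * p) * ((Re d)^2 / p) + ((1 + V) * q) * ((Im d)^2 / q)"
    using pq by simp
  also have "\<dots> \<le> (?M / 2) * ((Re d)^2 / p) + (?M / 2) * ((Im d)^2 / q)"
    using pq V by (intro add_mono mult_right_mono) (simp_all add: p_def q_def V_def)
  also have "\<dots> = (?M / 2) * ((Re d)^2 / p + (Im d)^2 / q)"
    by (simp add: distrib_left)
  also have "\<dots> \<le> (?M / 2) * norm u^2"
  proof (rule mult_left_mono)
    show "(Re d)^2 / p + (Im d)^2 / q \<le> norm u^2"
      using rowmul_in_ellipse[OF wh norm_cis \<theta> W, of u] by (simp add: d_def p_def q_def)
    show "0 \<le> ?M / 2"
      using V W by (simp add: V_def le_max_iff_disj)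
  qed
  finally show "norm (Theta_mat vh wh om t *v u)^2 \<le> ?M / 4 * norm u^2"
    by simp
qed (use W in \<open>auto simp: le_max_iff_disj\<close>)

lemma sqrt_ratio_le_a_max:
  fixes V W N2 D2 :: real
  assumes "0 \<le> V" "V < 1" "0 \<le> W" "(1 - V) / 2 \<le> D2" "N2 \<le> (1 + W) * (1 + V) / 4"
  shows "sqrt (N2 / D2) \<le> a_max V W"
proof -
  have "N2 / D2 \<le> ((1 + W) * (1 + V) / 4) / ((1 - V) / 2)"
    using assms by (intro frac_le) auto
  also have "\<dots> = (1 + W) * (1 + V) / (2 * (1 - V))"
    using assms(2) by (simp add: field_simps)
  finally show ?thesis
    unfolding a_max_def by (rule real_sqrt_le_mono)
qed

lemma a_max_le_sqrt_ratio:
  fixes V W N2 D2 :: real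
  assumes "V < 1" "D2 = (1 - V) / 2" "(1 + W) * (1 + V) / 4 \<le> N2"
  shows "a_max V W \<le> sqrt (N2 / D2)"
proof -
  have "(1 + W) * (1 + V) / (2 * (1 - V)) = ((1 + W) * (1 + V) / 4) / D2"
    using assms(1,2) by (simp add: field_simps)
  also have "\<dots> \<le> N2 / D2"
    using assms by (intro divide_right_mono) auto
  finally show ?thesis
    unfolding a_max_def by (rule real_sqrt_le_mono)
qed

lemma a_min_le_sqrt_ratio:
  fixes V W N2 D2 :: real
  assumes V: "0 \<le> V" "V < 1" and W: "0 \<le> W" and D2: "0 < D2" "D2 \<le> (1 + V) / 2"
    and N2: "(1 + W) * (1 - V) / 4 \<le> N2" "D2 * ((1 - W) / 2) \<le> N2"
  shows "a_min V W \<le> sqrt (N2 / D2)"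
proof (cases "V \<le> W")
  case True
  have "(1 + W) * (1 - V) / (2 * (1 + V)) = ((1 + W) * (1 - V) / 4) / ((1 + V) / 2)"
    using V by (simp add: field_simps)
  also have "\<dots> \<le> N2 / D2"
  proof (rule frac_le)
    have "0 \<le> (1 + W) * (1 - V) / 4"
      using V W by simp
    then show "0 \<le> N2"
      using N2(1) by linarith
  qed (use D2 N2(1) in auto)
  finally show ?thesis
    using True unfolding a_min_def by (simp add: real_sqrt_le_mono)
next
  case False
  have "(1 - W) / 2 \<le> N2 / D2"
    using D2(1) N2(2) by (simp add: pos_le_divide_eq mult.commute)
  then show ?thesis
    using False unfolding a_min_def by (simp add: real_sqrt_le_mono)
qed

lemma sqrt_ratio_le_a_min:
  fixes V W N2 D2 :: real
  assumes V: "0 \<le> V" "V < 1" and W: "0 \<le> W" and D2: "D2 = (1 + V) / 2"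
    and N2: "N2 \<le> max ((1 - V) * (1 + W)) ((1 + V) * (1 - W)) / 4"
  shows "sqrt (N2 / D2) \<le> a_min V W"
proof (cases "V \<le> W")
  case True
  then have "(1 + V) * (1 - W) \<le> (1 - V) * (1 + W)"
    by (simp add: algebra_simps)
  then have "N2 \<le> (1 - V) * (1 + W) / 4"
    using N2 by (simp add: max_def)
  then have "N2 / D2 \<le> ((1 - V) * (1 + W) / 4) / ((1 + V) / 2)"
    using V unfolding D2 by (intro divide_right_mono) auto
  also have "\<dots> = (1 + W) * (1 - V) / (2 * (1 + V))"
    using V by (simp add: field_simps)
  finally have "N2 / D2 \<le> (1 + W) * (1 - V) / (2 * (1 + V))" .
  then show ?thesis
    using True unfolding a_min_def by (simp add: real_sqrt_le_mono)
next
  case False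
  then have "(1 - V) * (1 + W) \<le> (1 + V) * (1 - W)"
    by (simp add: algebra_simps)
  then have "N2 \<le> (1 + V) * (1 - W) / 4"
    using N2 by (simp add: max_def)
  then have "N2 / D2 \<le> ((1 + V) * (1 - W) / 4) / ((1 + V) / 2)"
    using V unfolding D2 by (intro divide_right_mono) auto
  also have "\<dots> = (1 - W) / 2"
    using V by (simp add: field_simps)
  finally have "N2 / D2 \<le> (1 - W) / 2" .
  then show ?thesis
    using False unfolding a_min_def by (simp add: real_sqrt_le_mono)
qed

lemma OT_eq_sqrt_ratio:
  "OT vh wh om t y0
     = sqrt (spec_norm (Theta_mat vh wh om t)^2 / norm (Theta_vec vh wh om t (nrmz y0))^2)"
  by (simp add: OT_def real_sqrt_divide spec_norm_nonneg)

lemma OT_bounds: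
  fixes vh wh :: "complex^'n"
  assumes vh: "norm vh = 1" and wh: "norm wh = 1"
    and V: "cmod (tdot vh) < 1" and W: "cmod (tdot wh) < 1"
  shows "a_min (cmod (tdot vh)) (cmod (tdot wh)) \<le> OT vh wh om t y0"
    and "OT vh wh om t y0 \<le> a_max (cmod (tdot vh)) (cmod (tdot wh))"
proof -
  note D2 = norm_Theta_vec_power2_bounds[OF vh, of wh om t "nrmz y0"]
  have "0 < norm (Theta_vec vh wh om t (nrmz y0))^2"
    using V by (intro less_le_trans[OF _ D2(1)]) simp
  then show "a_min (cmod (tdot vh)) (cmod (tdot wh)) \<le> OT vh wh om t y0"
    unfolding OT_eq_sqrt_ratio
    using D2 V W spec_norm_Theta_mat_power2_ge[OF vh wh]
      spec_norm_Theta_mat_power2_ge_Theta_vec[OF vh wh W]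
    by (intro a_min_le_sqrt_ratio) auto
  show "OT vh wh om t y0 \<le> a_max (cmod (tdot vh)) (cmod (tdot wh))"
    unfolding OT_eq_sqrt_ratio
    using D2 V spec_norm_Theta_mat_power2_le[OF vh wh W]
    by (intro sqrt_ratio_le_a_max) auto
qed

lemma exists_time_phase:
  assumes "om \<noteq> 0"
  obtains t :: real where "cis (2 * (om * t + \<theta>)) * z = of_real (cmod z) * cis \<phi>"
proof -
  define t where "t = ((\<phi> - Arg z) / 2 - \<theta>) / om"
  have "2 * (om * t + \<theta>) = \<phi> - Arg z"
    using assms by (simp add: t_def field_simps)
  then have "cis (2 * (om * t + \<theta>)) * z = cis (\<phi> - Arg z) * rcis (cmod z) (Arg z)"
    by (simp add: rcis_cmod_Arg)
  also have "\<dots> = of_real (cmod z) * cis \<phi>"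
    by (simp add: rcis_def cis_mult mult.left_commute)
  finally show thesis
    by (rule that)
qed

lemma norm_Theta_vec_power2_quadrature:
  assumes vh: "norm vh = 1"
    and k: "Arg (rowmul wh y) - \<theta> = (2 * of_int k + 1) * (pi / 2)"
  shows "norm (Theta_vec vh wh om t y)^2 = (1 - Re (cis (2 * (om * t + \<theta>)) * tdot vh)) / 2"
proof -
  have "2 * (om * t + Arg (rowmul wh y)) = 2 * (om * t + \<theta>) + 2 * pi * of_int k + pi"
    using k by (simp add: algebra_simps)
  then have "cis (2 * (om * t + Arg (rowmul wh y)))
      = cis (2 * (om * t + \<theta>)) * cis (2 * pi * of_int k) * cis pi"
    by (simp only: cis_mult)
  then have "cis (2 * (om * t + Arg (rowmul wh y))) = - cis (2 * (om * t + \<theta>))"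
    by simp
  then show ?thesis
    by (simp add: norm_Theta_vec_power2 vh)
qed

lemma OT_attains_bounds:
  fixes vh wh :: "complex^'n"
  assumes vh: "norm vh = 1" and wh: "norm wh = 1"
    and V: "cmod (tdot vh) < 1" and W: "cmod (tdot wh) < 1" and om: "om \<noteq> 0"
    and \<theta>: "major_axis_angle wh \<theta>"
    and k: "Arg (rowmul wh (nrmz y0)) - \<theta> = (2 * of_int k + 1) * (pi / 2)"
  shows "\<exists>t. OT vh wh om t y0 = a_min (cmod (tdot vh)) (cmod (tdot wh))"
    and "\<exists>t. OT vh wh om t y0 = a_max (cmod (tdot vh)) (cmod (tdot wh))"
proof -
  have phase: "cis (- \<theta>)^2 * tdot wh = of_real (cmod (tdot wh))"
    by (rule major_axis_angle_phase[OF wh W \<theta>])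
  note D2 = norm_Theta_vec_power2_quadrature[OF vh k]
  obtain t where t: "cis (2 * (om * t + \<theta>)) * tdot vh = - of_real (cmod (tdot vh))"
    using exists_time_phase[OF om, of \<theta> "tdot vh" pi] by auto
  have "norm (Theta_vec vh wh om t (nrmz y0))^2 = (1 + cmod (tdot vh)) / 2"
    unfolding D2 t by simp
  then have "OT vh wh om t y0 \<le> a_min (cmod (tdot vh)) (cmod (tdot wh))"
    unfolding OT_eq_sqrt_ratio
    using spec_norm_Theta_mat_power2_le_antiphase[OF vh wh W phase t] V W
    by (intro sqrt_ratio_le_a_min) simp_all
  then show "\<exists>t. OT vh wh om t y0 = a_min (cmod (tdot vh)) (cmod (tdot wh))"
    using OT_bounds(1)[OF vh wh V W] by (blast intro: antisym)
  obtain t' where t': "cis (2 * (om * t' + \<theta>)) * tdot vh = of_real (cmod (tdot vh))"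
    using exists_time_phase[OF om, of \<theta> "tdot vh" 0] by auto
  have in_phase: "cis (2 * (om * t')) * cnj (cis (- \<theta>))^2 * tdot vh = cis (2 * (om * t' + \<theta>)) * tdot vh"
    by (simp add: cis_cnj cis_mult distrib_left)
  have "(1 + cmod (tdot wh)) * (1 + cmod (tdot vh)) / 4 \<le> spec_norm (Theta_mat vh wh om t')^2"
    using spec_norm_Theta_mat_power2_ge_major[OF vh wh norm_cis phase, of om t', unfolded in_phase t']
    by simp
  moreover have "norm (Theta_vec vh wh om t' (nrmz y0))^2 = (1 - cmod (tdot vh)) / 2"
    unfolding D2 t' by simp
  ultimately have "a_max (cmod (tdot vh)) (cmod (tdot wh)) \<le> OT vh wh om t' y0"
    unfolding OT_eq_sqrt_ratio using V by (intro a_max_le_sqrt_ratio) simp_all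
  then show "\<exists>t. OT vh wh om t y0 = a_max (cmod (tdot vh)) (cmod (tdot wh))"
    using OT_bounds(2)[OF vh wh V W] by (blast intro: antisym)
qed

theorem theorem10:
  fixes A :: "real^'n^'n" and l1 :: complex and v w :: "complex^'n" and y0 :: "real^'n"
  assumes "Lambda1_complex A l1"
    and "v \<noteq> 0" and "cmat A *v v = l1 *s v"
    and "w \<noteq> 0" and "w v* cmat A = l1 *s w"
    and "rowmul w y0 \<noteq> 0"
  shows "(\<forall>t. a_min (cmod (tdot (nrmz v))) (cmod (tdot (nrmz w))) \<le> OT (nrmz v) (nrmz w) (Im l1) t y0
             \<and> OT (nrmz v) (nrmz w) (Im l1) t y0 \<le> a_max (cmod (tdot (nrmz v))) (cmod (tdot (nrmz w))))
     \<and> (\<forall>\<theta>1. major_axis_angle (nrmz w) \<theta>1 \<and>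
           (\<exists>k::int. Arg (rowmul (nrmz w) (nrmz y0)) - \<theta>1 = (2 * of_int k + 1) * (pi / 2)) \<longrightarrow>
           (\<exists>t. OT (nrmz v) (nrmz w) (Im l1) t y0 = a_min (cmod (tdot (nrmz v))) (cmod (tdot (nrmz w))))
         \<and> (\<exists>t. OT (nrmz v) (nrmz w) (Im l1) t y0 = a_max (cmod (tdot (nrmz v))) (cmod (tdot (nrmz w)))))"
proof -
  have om: "Im l1 \<noteq> 0"
    using assms(1) by (simp add: Lambda1_complex_def)
  have vh: "norm (nrmz v) = 1" and wh: "norm (nrmz w) = 1"
    using assms(2,4) by (simp_all add: nrmz_def)
  have "cmat (transpose A) *v w = l1 *s w"
    using assms(5) by (simp add: cmat_transpose_mult_vec)
  then have V: "cmod (tdot (nrmz v)) < 1" and W: "cmod (tdot (nrmz w)) < 1"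
    using cmod_tdot_eigenvector_less_1[OF vh nrmz_eigenvector[OF assms(3)] om]
      cmod_tdot_eigenvector_less_1[OF wh nrmz_eigenvector om] by blast+
  show ?thesis
    using OT_bounds[OF vh wh V W] OT_attains_bounds[OF vh wh V W om] by blast
qed

end
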